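(* Let $(S,M)$ be a Coxeter matrix, $L_S$ a weight function, $e=\{s_+,s_-\}$ with $m_{s_+,s_-}=3$, and $(S/e,N)$ the edge contraction with the induced weight function $L_{S/e}$. Then there is an $\mathcal A$-algebra homomorphism $\phi_v:H_{S/e}\to H_S$ such that $\phi_v(T'_s)=T_s$ for all $s\in S/e$, $s\ne s_0$, and $\phi_v(T'_{s_0})=T_{s_+}T_{s_-}T_{s_+}^{-1}$.
   Context: $\mathcal A=\mathbb Z[v,v^{-1}]$. A Coxeter matrix on $S$ is a symmetric matrix $M=(m_{s,s'})$ with entries in $\mathbb Z_{\ge1}\sqcup\{\infty\}$, $m_{s,s'}=1$ iff $s=s'$; $W_{S,M}$ is the associated Coxeter group. A weight function is a map $L_S:S\to\mathbb Z$ with $L_S(s)=L_S(s')$ whenever $s,s'$ are conjugate in $W_{S,M}$; put $v_s=v^{L_S(s)}$. The Hecke algebra $H_S$ is the associative unital $\mathcal A$-algebra generated by $T_s$ ($s\in S$) with relations $(T_s-v_s)(T_s+v_s^{-1})=0$ for all $s$, and $T_sT_{s'}T_s\cdots=T_{s'}T_sT_{s'}\cdots$ (both sides with $m_{s,s'}$ factors) for all $s\ne s'$ with $m_{s,s'}\ne\infty$. (In particular each $T_s$ is invertible.) Edge contraction: $e=\{s_+,s_-\}\subseteq S$ with $m_{s_+,s_-}=3$; $S/e=(S\setminus\{s_+,s_-\})\sqcup\{s_0\}$; $N=(n_{s,s'})$ with $n_{s,s}=1$, $n_{s,s'}=m_{s,s'}$ for distinct $s,s'\ne s_0$, and for $s\neq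 s_0$: $n_{s,s_0}=n_{s_0,s}=m_{s,s_+}+m_{s,s_-}-2$ if $m_{s,s_+}=2$ or $m_{s,s_-}=2$ (with $\infty+k=\infty$), and $=\infty$ if both are $>2$. The induced weight function is $L_{S/e}(s_0)=L_S(s_+)$ and $L_{S/e}(s)=L_S(s)$ for $s\ne s_0$ (note $s_+,s_-$ are conjugate so $L_S(s_+)=L_S(s_-)$). $H_{S/e}$ is the Hecke algebra of $(S/e,N,L_{S/e})$, with generators denoted $T'_s$, $s\in S/e$. *)

theory Defs
  imports "HOL-Algebra.QuotRing" "HOL-Library.Poly_Mapping" "HOL-Library.Extended_Nat"
begin

text \<open>A Laurent polynomial sum_k a_k v^k is a finitely supported map k -> a_k;
  Poly_Mapping gives int =>0 int the convolution product, i.e. the group ring Z[Z].\<close>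
type_synonym laurent = "int \<Rightarrow>\<^sub>0 int"

definition vpow :: "int \<Rightarrow> laurent" where
  "vpow k = Poly_Mapping.single k 1"

definition coxeter_matrix :: "'s set \<Rightarrow> ('s \<Rightarrow> 's \<Rightarrow> enat) \<Rightarrow> bool" where
  "coxeter_matrix S M \<longleftrightarrow>
     (\<forall>s\<in>S. \<forall>t\<in>S. M s t = M t s \<and> M s t \<ge> 1 \<and> (M s t = 1 \<longleftrightarrow> s = t))"

definition alt_word :: "'s \<Rightarrow> 's \<Rightarrow> nat \<Rightarrow> 's list" where
  "alt_word s t n = map (\<lambda>i. if even i then s else t) [0..<n]"

text \<open>The Coxeter group W_{S,M}: words over S modulo the congruence generated by
  s s = 1 and the braid relations (a monoid presentation; since the generators are
  involutions this is the group presentation of W).\<close>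
inductive cox_eq :: "'s set \<Rightarrow> ('s \<Rightarrow> 's \<Rightarrow> enat) \<Rightarrow> 's list \<Rightarrow> 's list \<Rightarrow> bool"
  for S M where
  refl: "cox_eq S M w w"
| sym: "cox_eq S M u w \<Longrightarrow> cox_eq S M w u"
| trans: "cox_eq S M u w \<Longrightarrow> cox_eq S M w x \<Longrightarrow> cox_eq S M u x"
| invol: "s \<in> S \<Longrightarrow> cox_eq S M (u @ [s, s] @ w) (u @ w)"
| braid: "s \<in> S \<Longrightarrow> t \<in> S \<Longrightarrow> s \<noteq> t \<Longrightarrow> M s t = enat m \<Longrightarrow>
          cox_eq S M (u @ alt_word s t m @ w) (u @ alt_word t s m @ w)"

definition cox_conjugate :: "'s set \<Rightarrow> ('s \<Rightarrow> 's \<Rightarrow> enat) \<Rightarrow> 's \<Rightarrow> 's \<Rightarrow> bool" where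
  "cox_conjugate S M s t \<longleftrightarrow>
     (\<exists>w\<in>lists S. \<exists>w'\<in>lists S. cox_eq S M (w @ w') [] \<and> cox_eq S M (w @ [s] @ w') [t])"

definition weight_function :: "'s set \<Rightarrow> ('s \<Rightarrow> 's \<Rightarrow> enat) \<Rightarrow> ('s \<Rightarrow> int) \<Rightarrow> bool" where
  "weight_function S M L \<longleftrightarrow>
     (\<forall>s\<in>S. \<forall>t\<in>S. cox_conjugate S M s t \<longrightarrow> L s = L t)"

text \<open>Elements: finitely supported maps from words over S to A (noncommutative polynomials).\<close>
definition free_alg :: "'s set \<Rightarrow> ('s list \<Rightarrow> laurent) ring" where
  "free_alg S = \<lparr> carrier = {f. finite {w. f w \<noteq> 0} \<and> (\<forall>w. f w \<noteq> 0 \<longrightarrow> set w \<subseteq> S)},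
                  mult = (\<lambda>f g w. \<Sum>i\<le>length w. f (take i w) * g (drop i w)),
                  one = (\<lambda>w. if w = [] then 1 else 0),
                  zero = (\<lambda>w. 0),
                  add = (\<lambda>f g w. f w + g w) \<rparr>"

definition scal :: "laurent \<Rightarrow> 's list \<Rightarrow> laurent" where
  "scal c = (\<lambda>w. if w = [] then c else 0)"

definition gen :: "'s \<Rightarrow> 's list \<Rightarrow> laurent" where
  "gen s = (\<lambda>w. if w = [s] then 1 else 0)"

definition word_prod :: "'s set \<Rightarrow> 's list \<Rightarrow> 's list \<Rightarrow> laurent" where
  "word_prod S w = foldr (\<lambda>s x. gen s \<otimes>\<^bsub>free_alg S\<^esub> x) w \<one>\<^bsub>free_alg S\<^esub>"

definition hecke_rels :: "'s set \<Rightarrow> ('s \<Rightarrow> 's \<Rightarrow> enat) \<Rightarrow> ('s \<Rightarrow> int) \<Rightarrow> ('s list \<Rightarrow> laurent) set" where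
  "hecke_rels S M L =
     {(gen s \<ominus>\<^bsub>free_alg S\<^esub> scal (vpow (L s))) \<otimes>\<^bsub>free_alg S\<^esub> (gen s \<oplus>\<^bsub>free_alg S\<^esub> scal (vpow (- L s)))
        | s. s \<in> S}
   \<union> {word_prod S (alt_word s t m) \<ominus>\<^bsub>free_alg S\<^esub> word_prod S (alt_word t s m)
        | s t m. s \<in> S \<and> t \<in> S \<and> s \<noteq> t \<and> M s t = enat m}"

definition hecke_ideal :: "'s set \<Rightarrow> ('s \<Rightarrow> 's \<Rightarrow> enat) \<Rightarrow> ('s \<Rightarrow> int) \<Rightarrow> ('s list \<Rightarrow> laurent) set" where
  "hecke_ideal S M L = genideal (free_alg S) (hecke_rels S M L)"

text \<open>The Hecke algebra H_S (the quotient ring; its A-algebra structure is given by the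
  image of the scalars).\<close>
definition hecke :: "'s set \<Rightarrow> ('s \<Rightarrow> 's \<Rightarrow> enat) \<Rightarrow> ('s \<Rightarrow> int) \<Rightarrow> ('s list \<Rightarrow> laurent) set ring" where
  "hecke S M L = free_alg S Quot hecke_ideal S M L"

definition hT :: "'s set \<Rightarrow> ('s \<Rightarrow> 's \<Rightarrow> enat) \<Rightarrow> ('s \<Rightarrow> int) \<Rightarrow> 's \<Rightarrow> ('s list \<Rightarrow> laurent) set" where
  "hT S M L s = hecke_ideal S M L +>\<^bsub>free_alg S\<^esub> gen s"

definition hscal :: "'s set \<Rightarrow> ('s \<Rightarrow> 's \<Rightarrow> enat) \<Rightarrow> ('s \<Rightarrow> int) \<Rightarrow> laurent \<Rightarrow> ('s list \<Rightarrow> laurent) set" where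
  "hscal S M L c = hecke_ideal S M L +>\<^bsub>free_alg S\<^esub> scal c"

definition A_algebra_hom ::
  "'s set \<Rightarrow> ('s \<Rightarrow> 's \<Rightarrow> enat) \<Rightarrow> ('s \<Rightarrow> int) \<Rightarrow>
   't set \<Rightarrow> ('t \<Rightarrow> 't \<Rightarrow> enat) \<Rightarrow> ('t \<Rightarrow> int) \<Rightarrow>
   (('s list \<Rightarrow> laurent) set \<Rightarrow> ('t list \<Rightarrow> laurent) set) \<Rightarrow> bool" where
  "A_algebra_hom S M L S' M' L' \<phi> \<longleftrightarrow>
     \<phi> \<in> ring_hom (hecke S M L) (hecke S' M' L') \<and>
     (\<forall>c. \<phi> (hscal S M L c) = hscal S' M' L' c)"

text \<open>S/e is modelled on the type 's option: None is the new vertex s0 and Some s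
  (s in S - e) the old vertices.\<close>
definition contr_set :: "'s set \<Rightarrow> 's \<Rightarrow> 's \<Rightarrow> 's option set" where
  "contr_set S sp sm = {None} \<union> Some ` (S - {sp, sm})"

definition contr_edge_val :: "('s \<Rightarrow> 's \<Rightarrow> enat) \<Rightarrow> 's \<Rightarrow> 's \<Rightarrow> 's \<Rightarrow> enat" where
  "contr_edge_val M sp sm s =
     (if M s sp = 2 \<or> M s sm = 2 then M s sp + M s sm - 2 else \<infinity>)"

fun contr_matrix :: "('s \<Rightarrow> 's \<Rightarrow> enat) \<Rightarrow> 's \<Rightarrow> 's \<Rightarrow> 's option \<Rightarrow> 's option \<Rightarrow> enat" where
  "contr_matrix M sp sm None None = 1"
| "contr_matrix M sp sm (Some s) (Some t) = (if s = t then 1 else M s t)"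
| "contr_matrix M sp sm (Some s) None = contr_edge_val M sp sm s"
| "contr_matrix M sp sm None (Some s) = contr_edge_val M sp sm s"

fun contr_weight :: "('s \<Rightarrow> int) \<Rightarrow> 's \<Rightarrow> 's option \<Rightarrow> int" where
  "contr_weight L sp None = L sp"
| "contr_weight L sp (Some s) = L s"

end

theory Submission
  imports Defs
begin

text \<open>
  The Hecke algebra of \<open>S/e\<close> is a quotient of the free \<open>\<A>\<close>-algebra on \<open>S/e\<close>, so \<open>\<phi>\<^sub>v\<close> is
  obtained by evaluating free polynomials at \<open>T s\<close> for \<open>s \<noteq> s0\<close> and at \<open>T s+ \<cdot> T s- \<cdot> (T s+)\<inverse>\<close>
  for \<open>s0\<close>, once the defining relations of \<open>H\<^sub>S\<^sub>/\<^sub>e\<close> are seen to evaluate to zero.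
  Every generator is sent to a conjugate \<open>u \<cdot> T t \<cdot> u\<inverse>\<close> of a generator of \<open>H\<^sub>S\<close> by a unit, and
  conjugation is a ring automorphism fixing the scalars. This gives the quadratic relations, as
  \<open>s+\<close> and \<open>s-\<close> are conjugate in \<open>W\<close> and so have equal weights. For a braid relation between
  \<open>s0\<close> and \<open>s\<close>, one of \<open>m(s,s+)\<close>, \<open>m(s,s-)\<close> is 2 and the other is \<open>n(s,s0)\<close>. If \<open>m(s,s+) = 2\<close>,
  conjugation by \<open>T s+\<close> fixes \<open>T s\<close> and sends \<open>T s-\<close> to the image of \<open>T' s0\<close>; if
  \<open>m(s,s-) = 2\<close>, conjugation by \<open>(T s-)\<inverse>\<close> fixes \<open>T s\<close> and, by the braid relation
  \<open>T s+ \<cdot> T s- \<cdot> T s+ = T s- \<cdot> T s+ \<cdot> T s-\<close>, sends \<open>T s+\<close> to the same element. Either way the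
  relation is the conjugate of a braid relation of \<open>H\<^sub>S\<close>.
\<close>

section \<open>Products and conjugation in rings\<close>

context ring
begin

lemma minus_eq_zero_iff: "x \<in> carrier R \<Longrightarrow> y \<in> carrier R \<Longrightarrow> x \<ominus> y = \<zero> \<longleftrightarrow> x = y"
  by (metis a_minus_def add.inv_closed add.m_assoc l_neg r_neg r_zero)

lemma foldr_mult_closed: "set xs \<subseteq> carrier R \<Longrightarrow> foldr (\<otimes>) xs \<one> \<in> carrier R"
  by (induction xs) auto

lemma foldr_mult_append:
  "set xs \<subseteq> carrier R \<Longrightarrow> set ys \<subseteq> carrier R
    \<Longrightarrow> foldr (\<otimes>) (xs @ ys) \<one> = foldr (\<otimes>) xs \<one> \<otimes> foldr (\<otimes>) ys \<one>"
  by (induction xs) (auto simp: foldr_mult_closed m_assoc)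

lemma quadratic_Units:
  assumes c: "x \<in> carrier R" "a \<in> carrier R" "b \<in> carrier R"
    and comm: "a \<otimes> x = x \<otimes> a" "b \<otimes> x = x \<otimes> b" and ab: "a \<otimes> b = \<one>"
    and quadratic: "(x \<ominus> a) \<otimes> (x \<oplus> b) = \<zero>"
  shows "x \<in> Units R"
proof -
  have "(x \<ominus> a) \<otimes> (x \<oplus> b) = x \<otimes> (x \<ominus> a \<oplus> b) \<oplus> (x \<otimes> a \<ominus> a \<otimes> x) \<ominus> a \<otimes> b"
    using c by algebra
  moreover have "x \<otimes> a \<ominus> a \<otimes> x = \<zero>"
    using c comm by (simp add: minus_eq_zero_iff)
  ultimately have "x \<otimes> (x \<ominus> a \<oplus> b) \<ominus> \<one> = \<zero>"
    using quadratic ab c by simp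
  then have right: "x \<otimes> (x \<ominus> a \<oplus> b) = \<one>"
    using c by (simp add: minus_eq_zero_iff)
  have "(x \<ominus> a \<oplus> b) \<otimes> x = x \<otimes> x \<ominus> a \<otimes> x \<oplus> b \<otimes> x"
    using c by algebra
  also have "\<dots> = x \<otimes> x \<ominus> x \<otimes> a \<oplus> x \<otimes> b"
    using comm by simp
  also have "\<dots> = x \<otimes> (x \<ominus> a \<oplus> b)"
    using c by algebra
  finally have "(x \<ominus> a \<oplus> b) \<otimes> x = \<one>"
    using right by simp
  with right c show ?thesis
    unfolding Units_def by blast
qed

lemma Units_inv_mult_cancel [simp]: "u \<in> Units R \<Longrightarrow> x \<in> carrier R \<Longrightarrow> inv u \<otimes> (u \<otimes> x) = x"
  by (simp add: Units_closed flip: m_assoc)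

lemma Units_mult_inv_cancel [simp]: "u \<in> Units R \<Longrightarrow> x \<in> carrier R \<Longrightarrow> u \<otimes> (inv u \<otimes> x) = x"
  by (simp add: Units_closed flip: m_assoc)

lemma ring_hom_conj: "u \<in> Units R \<Longrightarrow> (\<lambda>x. u \<otimes> x \<otimes> inv u) \<in> ring_hom R R"
proof (rule ring_hom_memI)
  fix x y
  assume u: "u \<in> Units R" and x: "x \<in> carrier R" and y: "y \<in> carrier R"
  have "u \<otimes> x \<otimes> inv u \<otimes> (u \<otimes> y \<otimes> inv u) = u \<otimes> x \<otimes> (inv u \<otimes> u) \<otimes> y \<otimes> inv u"
    using u x y by (simp add: Units_closed m_assoc)
  then show "u \<otimes> (x \<otimes> y) \<otimes> inv u = u \<otimes> x \<otimes> inv u \<otimes> (u \<otimes> y \<otimes> inv u)"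
    using u x y by (simp add: Units_closed m_assoc)
  show "u \<otimes> (x \<oplus> y) \<otimes> inv u = u \<otimes> x \<otimes> inv u \<oplus> u \<otimes> y \<otimes> inv u"
    using u x y by (simp add: Units_closed l_distr r_distr)
qed (simp_all add: Units_closed)

lemma conj_commuting: "u \<in> Units R \<Longrightarrow> a \<in> carrier R \<Longrightarrow> u \<otimes> a = a \<otimes> u \<Longrightarrow> u \<otimes> a \<otimes> inv u = a"
  by (simp add: Units_closed m_assoc)

lemma Units_inv_commute:
  assumes u: "u \<in> Units R" and a: "a \<in> carrier R" and comm: "u \<otimes> a = a \<otimes> u"
  shows "inv u \<otimes> a = a \<otimes> inv u"
proof -
  have "inv u \<otimes> a = inv u \<otimes> (a \<otimes> u) \<otimes> inv u"
    using u a by (simp add: Units_closed m_assoc)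
  also have "\<dots> = (inv u \<otimes> u) \<otimes> a \<otimes> inv u"
    using u a by (simp add: Units_closed m_assoc flip: comm)
  also have "\<dots> = a \<otimes> inv u"
    using u a by (simp add: Units_closed)
  finally show ?thesis .
qed

end

lemma (in ring_hom_ring) hom_foldr_mult:
  "set xs \<subseteq> carrier R \<Longrightarrow> h (foldr (\<otimes>) xs \<one>) = foldr (\<otimes>\<^bsub>S\<^esub>) (map h xs) \<one>\<^bsub>S\<^esub>"
  by (induction xs) (simp_all add: R.foldr_mult_closed)

section \<open>The free algebra\<close>

lemma sum_atMost_triangle_swap:
  fixes F :: "nat \<Rightarrow> nat \<Rightarrow> 'a::comm_monoid_add"
  shows "(\<Sum>i\<le>n. \<Sum>j\<le>i. F j i) = (\<Sum>j\<le>n. \<Sum>k\<le>n - j. F j (j + k))"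
proof (induction n)
  case 0
  then show ?case by simp
next
  case (Suc n)
  have "(\<Sum>j\<le>Suc n. \<Sum>k\<le>Suc n - j. F j (j + k))
      = (\<Sum>j\<le>n. (\<Sum>k\<le>n - j. F j (j + k)) + F j (Suc n)) + F (Suc n) (Suc n)"
    by (simp add: Suc_diff_le)
  then show ?case
    using Suc by (simp add: sum.distrib add.assoc)
qed

lemma carrier_free_alg:
  "f \<in> carrier (free_alg S) \<longleftrightarrow> finite {w. f w \<noteq> 0} \<and> (\<forall>w. f w \<noteq> 0 \<longrightarrow> set w \<subseteq> S)"
  by (simp add: free_alg_def)

lemma mult_free_alg: "f \<otimes>\<^bsub>free_alg S\<^esub> g = (\<lambda>w. \<Sum>i\<le>length w. f (take i w) * g (drop i w))"
  by (simp add: free_alg_def)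

lemma add_free_alg: "f \<oplus>\<^bsub>free_alg S\<^esub> g = (\<lambda>w. f w + g w)"
  by (simp add: free_alg_def)

lemma one_free_alg: "\<one>\<^bsub>free_alg S\<^esub> = (\<lambda>w. if w = [] then 1 else 0)"
  by (simp add: free_alg_def)

lemma zero_free_alg: "\<zero>\<^bsub>free_alg S\<^esub> = (\<lambda>w. 0)"
  by (simp add: free_alg_def)

lemma word_convolution_assoc:
  fixes f g h :: "'a list \<Rightarrow> 'b::semiring_0"
  shows "(\<Sum>i\<le>length w. (\<Sum>j\<le>length (take i w). f (take j (take i w)) * g (drop j (take i w)))
            * h (drop i w))
       = (\<Sum>j\<le>length w. f (take j w)
            * (\<Sum>k\<le>length (drop j w). g (take k (drop j w)) * h (drop k (drop j w))))"
proof -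
  let ?n = "length w"
  have "(\<Sum>i\<le>?n. (\<Sum>j\<le>length (take i w). f (take j (take i w)) * g (drop j (take i w)))
            * h (drop i w))
      = (\<Sum>i\<le>?n. \<Sum>j\<le>i. f (take j w) * g (take (i - j) (drop j w)) * h (drop i w))"
  proof (rule sum.cong[OF HOL.refl])
    fix i
    assume "i \<in> {..?n}"
    then have "length (take i w) = i"
      by simp
    then show "(\<Sum>j\<le>length (take i w). f (take j (take i w)) * g (drop j (take i w))) * h (drop i w)
        = (\<Sum>j\<le>i. f (take j w) * g (take (i - j) (drop j w)) * h (drop i w))"
      by (simp add: sum_distrib_right min_def take_drop)
  qed
  also have "\<dots> = (\<Sum>j\<le>?n. \<Sum>k\<le>?n - j. f (take j w) * g (take k (drop j w)) * h (drop (j + k) w))"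
    by (subst sum_atMost_triangle_swap) simp
  also have "\<dots> = (\<Sum>j\<le>?n. f (take j w)
            * (\<Sum>k\<le>length (drop j w). g (take k (drop j w)) * h (drop k (drop j w))))"
    by (simp add: sum_distrib_left mult.assoc add.commute)
  finally show ?thesis .
qed

lemma word_convolution_support:
  "{w. (\<Sum>i\<le>length w. f (take i w) * g (drop i w)) \<noteq> (0::'b::semiring_0)}
     \<subseteq> (\<lambda>(u, v). u @ v) ` ({w. f w \<noteq> 0} \<times> {w. g w \<noteq> 0})"
proof
  fix w
  assume "w \<in> {w. (\<Sum>i\<le>length w. f (take i w) * g (drop i w)) \<noteq> 0}"
  then obtain i where "f (take i w) * g (drop i w) \<noteq> 0"
    by (auto elim: sum.not_neutral_contains_not_neutral)
  then show "w \<in> (\<lambda>(u, v). u @ v) ` ({w. f w \<noteq> 0} \<times> {w. g w \<noteq> 0})"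
    by (intro image_eqI[of _ _ "(take i w, drop i w)"]) auto
qed

lemma ring_free_alg: "ring (free_alg (S :: 'a set))"
proof (rule ringI)
  show "abelian_group (free_alg S)"
  proof (rule abelian_groupI)
    fix x y
    assume "x \<in> carrier (free_alg S)" "y \<in> carrier (free_alg S)"
    moreover have "{w. x w + y w \<noteq> 0} \<subseteq> {w. x w \<noteq> 0} \<union> {w. y w \<noteq> 0}"
      by auto
    ultimately show "x \<oplus>\<^bsub>free_alg S\<^esub> y \<in> carrier (free_alg S)"
      unfolding carrier_free_alg add_free_alg by (auto intro: finite_subset)
  next
    fix x
    assume "x \<in> carrier (free_alg S)"
    then show "\<exists>y\<in>carrier (free_alg S). y \<oplus>\<^bsub>free_alg S\<^esub> x = \<zero>\<^bsub>free_alg S\<^esub>"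
      by (intro bexI[of _ "\<lambda>w. - x w"]) (auto simp: add_free_alg zero_free_alg carrier_free_alg)
  qed (auto simp: carrier_free_alg add_free_alg zero_free_alg ac_simps)
next
  show "monoid (free_alg S)"
  proof (rule monoidI)
    fix x y
    assume x: "x \<in> carrier (free_alg S)" and y: "y \<in> carrier (free_alg S)"
    have "finite ((\<lambda>(u, v). u @ v) ` ({w. x w \<noteq> 0} \<times> {w. y w \<noteq> 0}))"
      using x y by (simp add: carrier_free_alg)
    then have "finite {w. (\<Sum>i\<le>length w. x (take i w) * y (drop i w)) \<noteq> 0}"
      by (rule finite_subset[OF word_convolution_support])
    moreover have "set w \<subseteq> S" if nonzero: "(\<Sum>i\<le>length w. x (take i w) * y (drop i w)) \<noteq> 0" for w
    proof -
      obtain i where "x (take i w) * y (drop i w) \<noteq> 0"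
        using nonzero by (blast elim: sum.not_neutral_contains_not_neutral)
      then have "x (take i w) \<noteq> 0" "y (drop i w) \<noteq> 0"
        by auto
      then have "set (take i w) \<subseteq> S" "set (drop i w) \<subseteq> S"
        using x y by (auto simp: carrier_free_alg)
      then show ?thesis
        by (metis append_take_drop_id set_append Un_subset_iff)
    qed
    ultimately show "x \<otimes>\<^bsub>free_alg S\<^esub> y \<in> carrier (free_alg S)"
      by (simp add: carrier_free_alg mult_free_alg)
  next
    fix x :: "'a list \<Rightarrow> laurent"
    have "(\<Sum>i\<le>length w. (if take i w = [] then 1 else 0) * x (drop i w)) = x w" for w
      by (subst sum.cong[OF HOL.refl, where h = "\<lambda>i. if i = 0 then x (drop i w) else 0"]) auto
    moreover have "(\<Sum>i\<le>length w. x (take i w) * (if drop i w = [] then 1 else 0)) = x w" for w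
      by (subst sum.cong[OF HOL.refl, where h = "\<lambda>i. if i = length w then x (take i w) else 0"]) auto
    ultimately show "\<one>\<^bsub>free_alg S\<^esub> \<otimes>\<^bsub>free_alg S\<^esub> x = x" "x \<otimes>\<^bsub>free_alg S\<^esub> \<one>\<^bsub>free_alg S\<^esub> = x"
      by (simp_all add: mult_free_alg one_free_alg)
  next
    fix x y z :: "'a list \<Rightarrow> laurent"
    show "x \<otimes>\<^bsub>free_alg S\<^esub> y \<otimes>\<^bsub>free_alg S\<^esub> z = x \<otimes>\<^bsub>free_alg S\<^esub> (y \<otimes>\<^bsub>free_alg S\<^esub> z)"
      unfolding mult_free_alg by (rule ext) (rule word_convolution_assoc)
  qed (simp add: carrier_free_alg one_free_alg)
qed (simp_all add: mult_free_alg add_free_alg distrib_left distrib_right sum.distrib)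

definition free_monom :: "laurent \<Rightarrow> 's list \<Rightarrow> 's list \<Rightarrow> laurent" where
  "free_monom c u = (\<lambda>w. if w = u then c else 0)"

lemma gen_eq_free_monom: "gen s = free_monom 1 [s]"
  by (simp add: gen_def free_monom_def)

lemma scal_eq_free_monom: "scal c = free_monom c []"
  by (simp add: scal_def free_monom_def)

lemma one_free_alg_eq_free_monom: "\<one>\<^bsub>free_alg S\<^esub> = free_monom 1 []"
  by (simp add: one_free_alg free_monom_def)

lemma free_monom_carrier: "set u \<subseteq> S \<Longrightarrow> free_monom c u \<in> carrier (free_alg S)"
  by (auto simp: carrier_free_alg free_monom_def intro: finite_subset[of _ "{u}"])

lemma free_monom_mult: "free_monom c u \<otimes>\<^bsub>free_alg S\<^esub> free_monom d v = free_monom (c * d) (u @ v)"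
proof (rule ext)
  fix w
  have "free_monom c u (take i w) * free_monom d v (drop i w)
      = (if i = length u then free_monom (c * d) (u @ v) w else 0)" if "i \<le> length w" for i
  proof -
    have split: "take i w = u \<and> drop i w = v \<longleftrightarrow> i = length u \<and> w = u @ v"
      using that by (metis append_eq_conv_conj length_take min_absorb2)
    show ?thesis
    proof (cases "take i w = u \<and> drop i w = v")
      case True
      then show ?thesis using split by (simp add: free_monom_def)
    next
      case False
      then show ?thesis using split by (auto simp: free_monom_def)
    qed
  qed
  then have "(\<Sum>i\<le>length w. free_monom c u (take i w) * free_monom d v (drop i w))
      = (\<Sum>i\<le>length w. if i = length u then free_monom (c * d) (u @ v) w else 0)"
    by (intro sum.cong HOL.refl) simp
  also have "\<dots> = free_monom (c * d) (u @ v) w"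
    by (simp add: free_monom_def)
  finally show "(free_monom c u \<otimes>\<^bsub>free_alg S\<^esub> free_monom d v) w = free_monom (c * d) (u @ v) w"
    by (simp add: mult_free_alg)
qed

lemma free_alg_finsum_apply:
  assumes "finite D" "F \<in> D \<rightarrow> carrier (free_alg S)"
  shows "finsum (free_alg S) F D w = (\<Sum>d\<in>D. F d w)"
  using assms
proof (induction D rule: finite_induct)
  case empty
  interpret ring "free_alg S" by (rule ring_free_alg)
  show ?case by (simp add: zero_free_alg)
next
  case (insert x D)
  interpret ring "free_alg S" by (rule ring_free_alg)
  from insert show ?case by (simp add: add_free_alg)
qed

lemma free_alg_eq_finsum_monom:
  assumes f: "f \<in> carrier (free_alg S)"
  shows "f = finsum (free_alg S) (\<lambda>u. free_monom (f u) u) {w. f w \<noteq> 0}"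
proof (rule ext)
  fix w
  have fin: "finite {w. f w \<noteq> 0}" and monoms: "(\<lambda>u. free_monom (f u) u) \<in> {w. f w \<noteq> 0} \<rightarrow> carrier (free_alg S)"
    using f by (auto simp: carrier_free_alg intro!: free_monom_carrier)
  have "(\<Sum>u\<in>{w. f w \<noteq> 0}. free_monom (f u) u w) = f w"
    by (cases "f w = 0") (auto simp: free_monom_def fin if_distrib sum.delta' cong: sum.cong)
  then show "f w = finsum (free_alg S) (\<lambda>u. free_monom (f u) u) {w. f w \<noteq> 0} w"
    by (simp add: free_alg_finsum_apply[OF fin monoms])
qed

lemma gen_carrier: "s \<in> S \<Longrightarrow> gen s \<in> carrier (free_alg S)"
  by (simp add: gen_eq_free_monom free_monom_carrier)

lemma scal_carrier: "scal c \<in> carrier (free_alg S)"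
  by (simp add: scal_eq_free_monom free_monom_carrier)

lemma scal_add: "scal (c + d) = scal c \<oplus>\<^bsub>free_alg S\<^esub> scal d"
  by (auto simp: scal_def add_free_alg)

lemma scal_mult: "scal (c * d) = scal c \<otimes>\<^bsub>free_alg S\<^esub> scal d"
  by (simp add: scal_eq_free_monom free_monom_mult)

lemma scal_one: "scal 1 = \<one>\<^bsub>free_alg S\<^esub>"
  by (simp add: scal_eq_free_monom one_free_alg_eq_free_monom)

lemma scal_central: "scal c \<otimes>\<^bsub>free_alg S\<^esub> f = f \<otimes>\<^bsub>free_alg S\<^esub> scal c"
proof (rule ext)
  fix w
  have "(\<Sum>i\<le>length w. scal c (take i w) * f (drop i w)) = c * f w"
    by (subst sum.cong[OF HOL.refl, where h = "\<lambda>i. if i = 0 then c * f w else 0"]) (auto simp: scal_def)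
  moreover have "(\<Sum>i\<le>length w. f (take i w) * scal c (drop i w)) = f w * c"
    by (subst sum.cong[OF HOL.refl, where h = "\<lambda>i. if i = length w then f w * c else 0"])
      (auto simp: scal_def)
  ultimately show "(scal c \<otimes>\<^bsub>free_alg S\<^esub> f) w = (f \<otimes>\<^bsub>free_alg S\<^esub> scal c) w"
    by (simp add: mult_free_alg mult.commute)
qed

lemma word_prod_Nil: "word_prod S [] = \<one>\<^bsub>free_alg S\<^esub>"
  by (simp add: word_prod_def)

lemma word_prod_Cons: "word_prod S (s # w) = gen s \<otimes>\<^bsub>free_alg S\<^esub> word_prod S w"
  by (simp add: word_prod_def)

lemma word_prod_carrier: "set w \<subseteq> S \<Longrightarrow> word_prod S w \<in> carrier (free_alg S)"
proof (induction w)
  case Nil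
  interpret ring "free_alg S" by (rule ring_free_alg)
  show ?case by (simp add: word_prod_Nil)
next
  case (Cons s w)
  interpret ring "free_alg S" by (rule ring_free_alg)
  from Cons show ?case by (simp add: word_prod_Cons gen_carrier)
qed

section \<open>Evaluating the free algebra in a ring\<close>

locale free_alg_eval = ring R for R (structure) +
  fixes S :: "'s set" and scalar :: "laurent \<Rightarrow> 'r" and img :: "'s \<Rightarrow> 'r"
  assumes scalar_closed [simp]: "scalar c \<in> carrier R"
    and scalar_add: "scalar (c + d) = scalar c \<oplus> scalar d"
    and scalar_mult: "scalar (c * d) = scalar c \<otimes> scalar d"
    and scalar_one: "scalar 1 = \<one>"
    and scalar_central: "x \<in> carrier R \<Longrightarrow> scalar c \<otimes> x = x \<otimes> scalar c"
    and img_closed: "s \<in> S \<Longrightarrow> img s \<in> carrier R"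
begin

definition eval_word :: "'s list \<Rightarrow> 'r" where
  "eval_word w = foldr (\<otimes>) (map img w) \<one>"

definition eval :: "('s list \<Rightarrow> laurent) \<Rightarrow> 'r" where
  "eval f = (\<Oplus>w\<in>{w. f w \<noteq> 0}. scalar (f w) \<otimes> eval_word w)"

lemma eval_word_closed: "set w \<subseteq> S \<Longrightarrow> eval_word w \<in> carrier R"
  unfolding eval_word_def by (rule foldr_mult_closed) (auto simp: img_closed)

lemma eval_word_append:
  "set u \<subseteq> S \<Longrightarrow> set v \<subseteq> S \<Longrightarrow> eval_word (u @ v) = eval_word u \<otimes> eval_word v"
  unfolding eval_word_def map_append by (rule foldr_mult_append) (auto simp: img_closed)

lemma scalar_zero: "scalar 0 = \<zero>"
  using scalar_add[of 0 0] by (simp add: add.l_cancel_one)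

lemma eval_closed: "f \<in> carrier (free_alg S) \<Longrightarrow> eval f \<in> carrier R"
  unfolding eval_def by (rule finsum_closed) (auto simp: carrier_free_alg eval_word_closed)

lemma eval_eq_finsum_superset:
  assumes "finite D" "{w. f w \<noteq> 0} \<subseteq> D" "\<forall>w\<in>D. set w \<subseteq> S"
  shows "eval f = (\<Oplus>w\<in>D. scalar (f w) \<otimes> eval_word w)"
  unfolding eval_def
  by (rule add.finprod_mono_neutral_cong_left[unfolded finsum_def[symmetric]])
    (use assms in \<open>auto simp: scalar_zero eval_word_closed\<close>)

lemma eval_add:
  assumes f: "f \<in> carrier (free_alg S)" and h: "h \<in> carrier (free_alg S)"
  shows "eval (f \<oplus>\<^bsub>free_alg S\<^esub> h) = eval f \<oplus> eval h"
proof -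
  let ?D = "{w. f w \<noteq> 0} \<union> {w. h w \<noteq> 0}"
  have D: "finite ?D" "\<forall>w\<in>?D. set w \<subseteq> S"
    using f h by (auto simp: carrier_free_alg)
  have "eval (f \<oplus>\<^bsub>free_alg S\<^esub> h) = (\<Oplus>w\<in>?D. scalar (f w + h w) \<otimes> eval_word w)"
    by (subst eval_eq_finsum_superset[OF D(1) _ D(2)]) (auto simp: add_free_alg)
  also have "\<dots> = (\<Oplus>w\<in>?D. scalar (f w) \<otimes> eval_word w \<oplus> scalar (h w) \<otimes> eval_word w)"
    by (rule finsum_cong') (use D in \<open>auto simp: scalar_add l_distr eval_word_closed\<close>)
  also have "\<dots> = (\<Oplus>w\<in>?D. scalar (f w) \<otimes> eval_word w) \<oplus> (\<Oplus>w\<in>?D. scalar (h w) \<otimes> eval_word w)"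
    by (rule finsum_addf) (use D in \<open>auto simp: eval_word_closed\<close>)
  also have "\<dots> = eval f \<oplus> eval h"
    using eval_eq_finsum_superset[OF D(1) _ D(2)] by auto
  finally show ?thesis .
qed

lemma eval_finsum:
  assumes "finite D" "F \<in> D \<rightarrow> carrier (free_alg S)"
  shows "eval (finsum (free_alg S) F D) = (\<Oplus>d\<in>D. eval (F d))"
  using assms
proof (induction D rule: finite_induct)
  case empty
  interpret F: ring "free_alg S" by (rule ring_free_alg)
  show ?case by (simp add: eval_def zero_free_alg)
next
  case (insert x D)
  interpret F: ring "free_alg S" by (rule ring_free_alg)
  from insert show ?case
    by (simp add: eval_add eval_closed F.finsum_closed Pi_iff)
qed

lemma eval_free_monom: "set u \<subseteq> S \<Longrightarrow> eval (free_monom c u) = scalar c \<otimes> eval_word u"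
  by (cases "c = 0")
    (simp_all add: eval_def free_monom_def scalar_zero eval_word_closed if_distrib cong: conj_cong)

lemma eval_mult_free_monom:
  assumes u: "set u \<subseteq> S" and v: "set v \<subseteq> S"
  shows "eval (free_monom c u \<otimes>\<^bsub>free_alg S\<^esub> free_monom d v) = eval (free_monom c u) \<otimes> eval (free_monom d v)"
proof -
  have wu: "eval_word u \<in> carrier R" and wv: "eval_word v \<in> carrier R"
    using u v by (simp_all add: eval_word_closed)
  have "eval (free_monom c u \<otimes>\<^bsub>free_alg S\<^esub> free_monom d v)
      = scalar c \<otimes> (scalar d \<otimes> eval_word u) \<otimes> eval_word v"
    using u v wu wv by (simp add: free_monom_mult eval_free_monom scalar_mult eval_word_append m_assoc)
  also have "\<dots> = scalar c \<otimes> (eval_word u \<otimes> scalar d) \<otimes> eval_word v"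
    by (simp add: scalar_central[OF wu])
  also have "\<dots> = (scalar c \<otimes> eval_word u) \<otimes> (scalar d \<otimes> eval_word v)"
    using wu wv by (simp add: m_assoc)
  finally show ?thesis
    using u v by (simp add: eval_free_monom)
qed

lemma eval_mult_left_free_monom:
  assumes u: "set u \<subseteq> S" and h: "h \<in> carrier (free_alg S)"
  shows "eval (free_monom c u \<otimes>\<^bsub>free_alg S\<^esub> h) = eval (free_monom c u) \<otimes> eval h"
proof -
  interpret F: ring "free_alg S" by (rule ring_free_alg)
  let ?D = "{w. h w \<noteq> 0}"
  have D: "finite ?D" "\<And>v. v \<in> ?D \<Longrightarrow> set v \<subseteq> S"
    using h by (auto simp: carrier_free_alg)
  have monoms: "(\<lambda>v. free_monom (h v) v) \<in> ?D \<rightarrow> carrier (free_alg S)"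
    using D by (auto intro: free_monom_carrier)
  have "eval (free_monom c u \<otimes>\<^bsub>free_alg S\<^esub> h)
      = eval (\<Oplus>\<^bsub>free_alg S\<^esub>v\<in>?D. free_monom c u \<otimes>\<^bsub>free_alg S\<^esub> free_monom (h v) v)"
    by (subst free_alg_eq_finsum_monom[OF h])
      (simp add: F.finsum_rdistr[OF D(1) free_monom_carrier[OF u] monoms])
  also have "\<dots> = (\<Oplus>v\<in>?D. eval (free_monom c u) \<otimes> eval (free_monom (h v) v))"
    using D u by (simp add: eval_finsum Pi_iff free_monom_carrier)
      (intro finsum_cong' eval_mult_free_monom, auto intro!: m_closed eval_closed free_monom_carrier)
  also have "\<dots> = eval (free_monom c u) \<otimes> eval h"
    using D u monoms
    by (subst (2) free_alg_eq_finsum_monom[OF h])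
      (simp add: eval_finsum finsum_rdistr eval_closed free_monom_carrier Pi_iff)
  finally show ?thesis .
qed

lemma eval_mult:
  assumes f: "f \<in> carrier (free_alg S)" and h: "h \<in> carrier (free_alg S)"
  shows "eval (f \<otimes>\<^bsub>free_alg S\<^esub> h) = eval f \<otimes> eval h"
proof -
  interpret F: ring "free_alg S" by (rule ring_free_alg)
  let ?D = "{w. f w \<noteq> 0}"
  have D: "finite ?D" "\<And>u. u \<in> ?D \<Longrightarrow> set u \<subseteq> S"
    using f by (auto simp: carrier_free_alg)
  have monoms: "(\<lambda>u. free_monom (f u) u) \<in> ?D \<rightarrow> carrier (free_alg S)"
    using D by (auto intro: free_monom_carrier)
  have "eval (f \<otimes>\<^bsub>free_alg S\<^esub> h) = eval (\<Oplus>\<^bsub>free_alg S\<^esub>u\<in>?D. free_monom (f u) u \<otimes>\<^bsub>free_alg S\<^esub> h)"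
    by (subst free_alg_eq_finsum_monom[OF f]) (simp add: F.finsum_ldistr[OF D(1) h monoms])
  also have "\<dots> = (\<Oplus>u\<in>?D. eval (free_monom (f u) u) \<otimes> eval h)"
    using D h by (simp add: eval_finsum Pi_iff free_monom_carrier)
      (intro finsum_cong' eval_mult_left_free_monom, auto intro!: m_closed eval_closed free_monom_carrier)
  also have "\<dots> = eval f \<otimes> eval h"
    using D h monoms
    by (subst (2) free_alg_eq_finsum_monom[OF f])
      (simp add: eval_finsum finsum_ldistr eval_closed free_monom_carrier Pi_iff)
  finally show ?thesis .
qed

lemma eval_ring_hom: "eval \<in> ring_hom (free_alg S) R"
proof (rule ring_hom_memI)
  show "eval \<one>\<^bsub>free_alg S\<^esub> = \<one>"
    by (simp add: one_free_alg_eq_free_monom eval_free_monom scalar_one eval_word_def)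
qed (simp_all add: eval_closed eval_add eval_mult)

lemma eval_gen: "s \<in> S \<Longrightarrow> eval (gen s) = img s"
  by (simp add: gen_eq_free_monom eval_free_monom scalar_one eval_word_def img_closed)

lemma eval_scal: "eval (scal c) = scalar c"
  by (simp add: scal_eq_free_monom eval_free_monom eval_word_def)

lemma eval_word_prod: "set w \<subseteq> S \<Longrightarrow> eval (word_prod S w) = eval_word w"
proof (induction w)
  case Nil
  then show ?case
    by (simp add: word_prod_Nil one_free_alg_eq_free_monom eval_free_monom scalar_one eval_word_def)
next
  case (Cons s w)
  then show ?case
    by (simp add: word_prod_Cons eval_mult gen_carrier word_prod_carrier eval_gen eval_word_def)
qed

end

lemma quotient_ring_hom_lift:
  assumes A: "ring A" and B: "ring B" and h: "h \<in> ring_hom A B" and I: "ideal I A"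
    and vanish: "\<And>x. x \<in> I \<Longrightarrow> h x = \<zero>\<^bsub>B\<^esub>"
  shows "\<exists>\<phi>. \<phi> \<in> ring_hom (A Quot I) B \<and> (\<forall>x\<in>carrier A. \<phi> (I +>\<^bsub>A\<^esub> x) = h x)"
proof -
  interpret I: ideal I A by (rule I)
  interpret H: ring_hom_ring A B h using A B h by (rule ring_hom_ringI2)
  have image_coset: "h ` (I +>\<^bsub>A\<^esub> x) = {h x}" if x: "x \<in> carrier A" for x
  proof -
    have "h (i \<oplus>\<^bsub>A\<^esub> x) = h x" if "i \<in> I" for i
      using that x vanish I.Icarr by simp
    moreover have "x \<in> I +>\<^bsub>A\<^esub> x"
      using x by (rule I.a_rcos_self)
    ultimately show ?thesis
      by (auto simp: a_r_coset_def r_coset_def)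
  qed
  define \<phi> where "\<phi> X = the_elem (h ` X)" for X
  have \<phi>_coset: "\<phi> (I +>\<^bsub>A\<^esub> x) = h x" if "x \<in> carrier A" for x
    using image_coset[OF that] by (simp add: \<phi>_def)
  have cosets: "\<exists>x\<in>carrier A. X = I +>\<^bsub>A\<^esub> x" if "X \<in> carrier (A Quot I)" for X
    using that by (auto simp: FactRing_def A_RCOSETS_def RCOSETS_def a_r_coset_def)
  have proj: "(+>\<^bsub>A\<^esub>) I \<in> ring_hom A (A Quot I)"
    by (rule I.rcos_ring_hom)
  have "\<phi> \<in> ring_hom (A Quot I) B"
  proof (rule ring_hom_memI)
    fix X Y
    assume "X \<in> carrier (A Quot I)" "Y \<in> carrier (A Quot I)"
    then obtain x y where x: "x \<in> carrier A" "X = I +>\<^bsub>A\<^esub> x" and y: "y \<in> carrier A" "Y = I +>\<^bsub>A\<^esub> y"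
      using cosets by metis
    show "\<phi> (X \<otimes>\<^bsub>A Quot I\<^esub> Y) = \<phi> X \<otimes>\<^bsub>B\<^esub> \<phi> Y"
      using x y by (simp add: \<phi>_coset flip: ring_hom_mult[OF proj])
    show "\<phi> (X \<oplus>\<^bsub>A Quot I\<^esub> Y) = \<phi> X \<oplus>\<^bsub>B\<^esub> \<phi> Y"
      using x y by (simp add: \<phi>_coset flip: ring_hom_add[OF proj])
  next
    fix X
    assume "X \<in> carrier (A Quot I)"
    then show "\<phi> X \<in> carrier B"
      using cosets \<phi>_coset by fastforce
  next
    show "\<phi> \<one>\<^bsub>A Quot I\<^esub> = \<one>\<^bsub>B\<^esub>"
      by (simp add: \<phi>_coset flip: ring_hom_one[OF proj])
  qed
  with \<phi>_coset show ?thesis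
    by blast
qed

section \<open>Hecke algebras\<close>

lemma alt_word_set: "set (alt_word s t m) \<subseteq> {s, t}"
  by (auto simp: alt_word_def)

lemma map_alt_word: "map f (alt_word s t m) = alt_word (f s) (f t) m"
  by (simp add: alt_word_def)

lemma hecke_rels_carrier: "hecke_rels S M L \<subseteq> carrier (free_alg S)"
proof -
  interpret ring "free_alg S" by (rule ring_free_alg)
  have "set (alt_word s t m) \<subseteq> S" if "s \<in> S" "t \<in> S" for s t m
    using alt_word_set[of s t m] that by blast
  then show ?thesis
    by (auto simp: hecke_rels_def gen_carrier scal_carrier word_prod_carrier)
qed

lemma hecke_ideal_ideal: "ideal (hecke_ideal S M L) (free_alg S)"
  unfolding hecke_ideal_def by (rule ring.genideal_ideal[OF ring_free_alg hecke_rels_carrier])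

lemma ring_hecke: "ring (hecke S M L)"
  unfolding hecke_def by (rule ideal.quotient_is_ring[OF hecke_ideal_ideal])

lemma hecke_rel_vanishes:
  assumes "r \<in> hecke_rels S M L"
  shows "hecke_ideal S M L +>\<^bsub>free_alg S\<^esub> r = \<zero>\<^bsub>hecke S M L\<^esub>"
proof -
  interpret I: ideal "hecke_ideal S M L" "free_alg S" by (rule hecke_ideal_ideal)
  have "r \<in> hecke_ideal S M L"
    using assms ring.genideal_self[OF ring_free_alg hecke_rels_carrier]
    unfolding hecke_ideal_def by blast
  then show ?thesis
    by (simp add: I.a_rcos_const hecke_def FactRing_def)
qed

locale hecke_alg =
  fixes S :: "'s set" and M :: "'s \<Rightarrow> 's \<Rightarrow> enat" and L :: "'s \<Rightarrow> int"
    and H (structure)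
  defines H_def: "H \<equiv> hecke S M L"
begin

sublocale ring H
  unfolding H_def by (rule ring_hecke)

abbreviation proj :: "('s list \<Rightarrow> laurent) \<Rightarrow> ('s list \<Rightarrow> laurent) set" where
  "proj \<equiv> (+>\<^bsub>free_alg S\<^esub>) (hecke_ideal S M L)"

sublocale proj: ring_hom_ring "free_alg S" H proj
  unfolding H_def hecke_def by (rule ideal.rcos_ring_hom_ring[OF hecke_ideal_ideal])

abbreviation T :: "'s \<Rightarrow> ('s list \<Rightarrow> laurent) set" where
  "T \<equiv> hT S M L"

abbreviation hs :: "laurent \<Rightarrow> ('s list \<Rightarrow> laurent) set" where
  "hs \<equiv> hscal S M L"

lemma T_closed: "s \<in> S \<Longrightarrow> T s \<in> carrier H"
  by (simp add: hT_def gen_carrier)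

lemma hs_closed: "hs c \<in> carrier H"
  by (simp add: hscal_def scal_carrier)

lemma hs_add: "hs (c + d) = hs c \<oplus> hs d"
  by (simp add: hscal_def scal_add[of c d S] scal_carrier)

lemma hs_mult: "hs (c * d) = hs c \<otimes> hs d"
  by (simp add: hscal_def scal_mult[of c d S] scal_carrier)

lemma hs_one: "hs 1 = \<one>"
  by (simp add: hscal_def scal_one[of S])

lemma hs_central: "X \<in> carrier H \<Longrightarrow> hs c \<otimes> X = X \<otimes> hs c"
proof -
  assume "X \<in> carrier H"
  then obtain x where "x \<in> carrier (free_alg S)" "X = proj x"
    by (auto simp: H_def hecke_def FactRing_def A_RCOSETS_def RCOSETS_def a_r_coset_def)
  then show ?thesis
    by (simp add: hscal_def scal_carrier scal_central flip: proj.hom_mult)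
qed

lemma proj_word_prod: "set w \<subseteq> S \<Longrightarrow> proj (word_prod S w) = foldr (\<otimes>) (map T w) \<one>"
  by (induction w) (simp_all add: word_prod_Nil word_prod_Cons gen_carrier word_prod_carrier hT_def)

lemma hecke_quadratic:
  assumes "s \<in> S"
  shows "(T s \<ominus> hs (vpow (L s))) \<otimes> (T s \<oplus> hs (vpow (- L s))) = \<zero>"
proof -
  let ?r = "(gen s \<ominus>\<^bsub>free_alg S\<^esub> scal (vpow (L s)))
    \<otimes>\<^bsub>free_alg S\<^esub> (gen s \<oplus>\<^bsub>free_alg S\<^esub> scal (vpow (- L s)))"
  have "?r \<in> hecke_rels S M L"
    unfolding hecke_rels_def using assms by blast
  then have "proj ?r = \<zero>"
    unfolding H_def by (rule hecke_rel_vanishes)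
  then show ?thesis
    using assms by (simp add: gen_carrier scal_carrier a_minus_def hT_def hscal_def)
qed

lemma hecke_braid:
  assumes "s \<in> S" "t \<in> S" "s \<noteq> t" "M s t = enat m"
  shows "foldr (\<otimes>) (map T (alt_word s t m)) \<one> = foldr (\<otimes>) (map T (alt_word t s m)) \<one>"
proof -
  have words: "set (alt_word s t m) \<subseteq> S" "set (alt_word t s m) \<subseteq> S"
    using alt_word_set[of s t m] alt_word_set[of t s m] assms by auto
  let ?r = "word_prod S (alt_word s t m) \<ominus>\<^bsub>free_alg S\<^esub> word_prod S (alt_word t s m)"
  have "?r \<in> hecke_rels S M L"
    unfolding hecke_rels_def using assms by blast
  then have "proj ?r = \<zero>"
    unfolding H_def by (rule hecke_rel_vanishes)
  moreover have "proj ?r = foldr (\<otimes>) (map T (alt_word s t m)) \<one> \<ominus> foldr (\<otimes>) (map T (alt_word t s m)) \<one>"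
    using words by (simp add: a_minus_def word_prod_carrier proj_word_prod)
  moreover have "set (map T w) \<subseteq> carrier H" if "set w \<subseteq> S" for w
    using that T_closed by auto
  ultimately show ?thesis
    using words by (simp add: minus_eq_zero_iff foldr_mult_closed)
qed

lemma T_Units: "s \<in> S \<Longrightarrow> T s \<in> Units H"
  by (rule quadratic_Units[OF T_closed hs_closed hs_closed _ _ _ hecke_quadratic])
    (simp_all add: hs_central T_closed vpow_def mult_single hs_one flip: hs_mult)

lemma T_commute:
  assumes "s \<in> S" "t \<in> S" "s \<noteq> t" "M s t = 2"
  shows "T s \<otimes> T t = T t \<otimes> T s"
proof -
  have "M s t = enat 2"
    using assms(4) by (simp add: numeral_eq_enat)
  from hecke_braid[OF assms(1-3) this] show ?thesis
    using assms T_closed by (simp add: alt_word_def numeral_2_eq_2)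
qed

lemma hecke_quadratic_conj:
  assumes u: "u \<in> Units H" and t: "t \<in> S"
  shows "(u \<otimes> T t \<otimes> inv u \<ominus> hs (vpow (L t))) \<otimes> (u \<otimes> T t \<otimes> inv u \<oplus> hs (vpow (- L t))) = \<zero>"
proof -
  interpret conj: ring_hom_ring H H "\<lambda>x. u \<otimes> x \<otimes> inv u"
    by (rule ring_hom_ringI2[OF ring_axioms ring_axioms ring_hom_conj[OF u]])
  have fixed: "u \<otimes> hs c \<otimes> inv u = hs c" for c
    using u by (simp add: conj_commuting hs_closed hs_central Units_closed)
  have "u \<otimes> ((T t \<ominus> hs (vpow (L t))) \<otimes> (T t \<oplus> hs (vpow (- L t)))) \<otimes> inv u = \<zero>"
    using hecke_quadratic[OF t] u by simp
  then show ?thesis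
    using t by (simp add: a_minus_def T_closed hs_closed fixed)
qed

lemma hecke_braid_conj:
  assumes u: "u \<in> Units H" and "s \<in> S" "t \<in> S" "s \<noteq> t" "M s t = enat m"
  shows "foldr (\<otimes>) (alt_word (u \<otimes> T s \<otimes> inv u) (u \<otimes> T t \<otimes> inv u) m) \<one>
       = foldr (\<otimes>) (alt_word (u \<otimes> T t \<otimes> inv u) (u \<otimes> T s \<otimes> inv u) m) \<one>"
proof -
  interpret conj: ring_hom_ring H H "\<lambda>x. u \<otimes> x \<otimes> inv u"
    by (rule ring_hom_ringI2[OF ring_axioms ring_axioms ring_hom_conj[OF u]])
  have conj_word: "foldr (\<otimes>) (alt_word (u \<otimes> T a \<otimes> inv u) (u \<otimes> T b \<otimes> inv u) m) \<one>
      = u \<otimes> foldr (\<otimes>) (map T (alt_word a b m)) \<one> \<otimes> inv u" if "a \<in> S" "b \<in> S" for a b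
  proof -
    have "set (map T (alt_word a b m)) \<subseteq> carrier H"
      using alt_word_set[of a b m] that T_closed by auto
    from conj.hom_foldr_mult[OF this] show ?thesis
      by (simp add: map_alt_word)
  qed
  show ?thesis
    using hecke_braid[OF assms(2-)] assms(2,3) by (simp add: conj_word)
qed

end


section \<open>Edge contraction\<close>

lemma contr_edge_val_eq_enat:
  assumes "contr_edge_val M sp sm a = enat m"
  shows "M a sp = 2 \<and> M a sm = enat m \<or> M a sm = 2 \<and> M a sp = enat m"
proof -
  have two: "M a sp = 2 \<or> M a sm = 2" and sum: "M a sp + M a sm - 2 = enat m"
    using assms by (auto simp: contr_edge_val_def split: if_splits)
  have cancel: "x = enat m" if "2 + x - 2 = enat m" for x :: enat
    using that by (cases x) (simp_all add: numeral_eq_enat)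
  show ?thesis
  proof (cases "M a sp = 2")
    case True
    then show ?thesis
      using sum cancel by simp
  next
    case False
    then show ?thesis
      using two sum cancel[of "M a sp"] by (simp add: add.commute)
  qed
qed

locale edge_contraction = hecke_alg S M L H
  for S :: "'s set" and M L and H (structure) +
  fixes sp sm :: 's
  assumes coxeter: "coxeter_matrix S M" and weight: "weight_function S M L"
    and sp: "sp \<in> S" and sm: "sm \<in> S" and m3: "M sp sm = 3"
begin

abbreviation "S' \<equiv> contr_set S sp sm"
abbreviation "M' \<equiv> contr_matrix M sp sm"
abbreviation "L' \<equiv> contr_weight L sp"

lemma sp_ne_sm: "sp \<noteq> sm"
proof
  assume "sp = sm"
  then have "M sp sm = 1"
    using coxeter sp unfolding coxeter_matrix_def by blast
  with m3 show False
    by simp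
qed

lemma M_sym: "s \<in> S \<Longrightarrow> t \<in> S \<Longrightarrow> M s t = M t s"
  using coxeter unfolding coxeter_matrix_def by blast

lemma L_sm_eq_L_sp: "L sm = L sp"
proof -
  have "cox_eq S M [sp, sm, sm, sp] [sp, sp]"
    using cox_eq.invol[OF sm, where u = "[sp]" and w = "[sp]"] by simp
  moreover have "cox_eq S M [sp, sp] []"
    using cox_eq.invol[OF sp, where u = "[]" and w = "[]"] by simp
  ultimately have inverse: "cox_eq S M ([sp, sm] @ [sm, sp]) []"
    by (simp add: cox_eq.trans)
  have "M sp sm = enat 3"
    using m3 by (simp add: numeral_eq_enat)
  from cox_eq.braid[where M = M and u = "[]" and w = "[sm, sp]", OF sp sm sp_ne_sm this]
  have "cox_eq S M [sp, sm, sp, sm, sp] [sm, sp, sm, sm, sp]"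
    by (simp add: alt_word_def numeral_3_eq_3)
  moreover have "cox_eq S M [sm, sp, sm, sm, sp] [sm, sp, sp]"
    using cox_eq.invol[OF sm, where u = "[sm, sp]" and w = "[sp]"] by simp
  moreover have "cox_eq S M [sm, sp, sp] [sm]"
    using cox_eq.invol[OF sp, where u = "[sm]" and w = "[]"] by simp
  ultimately have "cox_eq S M ([sp, sm] @ [sp] @ [sm, sp]) [sm]"
    by (metis append_Cons append_Nil cox_eq.trans)
  with inverse have "cox_conjugate S M sp sm"
    unfolding cox_conjugate_def using sp sm
    by (intro bexI[of _ "[sp, sm]"] bexI[of _ "[sm, sp]"]) auto
  with weight sp sm show ?thesis
    unfolding weight_function_def by metis
qed

lemma T_sp_sm_braid: "T sp \<otimes> T sm \<otimes> T sp = T sm \<otimes> T sp \<otimes> T sm"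
proof -
  have "M sp sm = enat 3"
    using m3 by (simp add: numeral_eq_enat)
  from hecke_braid[OF sp sm sp_ne_sm this] show ?thesis
    using T_closed sp sm by (simp add: alt_word_def numeral_3_eq_3 m_assoc)
qed

definition contr_gen :: "'s option \<Rightarrow> ('s list \<Rightarrow> laurent) set" where
  "contr_gen x = (case x of None \<Rightarrow> T sp \<otimes> T sm \<otimes> inv (T sp) | Some s \<Rightarrow> T s)"

lemma contr_gen_None_conj_sm: "contr_gen None = inv (T sm) \<otimes> T sp \<otimes> inv (inv (T sm))"
proof -
  have units: "T sp \<in> Units H" "T sm \<in> Units H"
    using T_Units sp sm by blast+
  have "inv (T sm) \<otimes> T sp \<otimes> T sm = inv (T sm) \<otimes> (T sp \<otimes> T sm \<otimes> T sp) \<otimes> inv (T sp)"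
    using units by (simp add: Units_closed m_assoc)
  also have "\<dots> = contr_gen None"
    using units by (simp add: T_sp_sm_braid Units_closed m_assoc contr_gen_def)
  finally show ?thesis
    using units by simp
qed

lemma contr_gen_closed: "x \<in> S' \<Longrightarrow> contr_gen x \<in> carrier H"
  using T_Units sp sm by (auto simp: contr_gen_def contr_set_def T_closed Units_closed)

lemma contr_gen_conj:
  assumes "x \<in> S'"
  shows "\<exists>u t. u \<in> Units H \<and> t \<in> S \<and> L t = L' x \<and> contr_gen x = u \<otimes> T t \<otimes> inv u"
proof (cases x)
  case None
  then show ?thesis
    using T_Units sp sm L_sm_eq_L_sp by (auto simp: contr_gen_def)
next
  case (Some s)
  then show ?thesis
    using assms T_closed by (intro exI[of _ \<one>] exI[of _ s]) (auto simp: contr_gen_def contr_set_def)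
qed

text \<open>The new vertex is conjugate to \<open>sm\<close> by \<open>T sp\<close> and to \<open>sp\<close> by \<open>T sm\<inverse>\<close>; whichever of
  \<open>sp\<close>, \<open>sm\<close> commutes with \<open>b\<close> provides a conjugation fixing \<open>T b\<close>.\<close>
lemma contr_gen_None_conj_pair:
  assumes b: "b \<in> S - {sp, sm}" and m: "contr_edge_val M sp sm b = enat m"
  shows "\<exists>u a. u \<in> Units H \<and> a \<in> S \<and> a \<noteq> b \<and> M a b = enat m
           \<and> contr_gen None = u \<otimes> T a \<otimes> inv u \<and> T b = u \<otimes> T b \<otimes> inv u"
  using contr_edge_val_eq_enat[OF m]
proof
  assume M: "M b sp = 2 \<and> M b sm = enat m"
  have "T sp \<otimes> T b = T b \<otimes> T sp"
    using T_commute[of sp b] M M_sym[of sp b] b sp by auto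
  then have "T b = T sp \<otimes> T b \<otimes> inv (T sp)"
    using conj_commuting[OF T_Units[OF sp] T_closed] b by simp
  with M b sm show ?thesis
    by (intro exI[of _ "T sp"] exI[of _ sm]) (auto simp: T_Units sp M_sym[of sm b] contr_gen_def)
next
  assume M: "M b sm = 2 \<and> M b sp = enat m"
  have "T sm \<otimes> T b = T b \<otimes> T sm"
    using T_commute[of sm b] M M_sym[of sm b] b sm by auto
  then have "inv (T sm) \<otimes> T b = T b \<otimes> inv (T sm)"
    using b sm by (simp add: Units_inv_commute T_Units T_closed)
  then have "T b = inv (T sm) \<otimes> T b \<otimes> inv (inv (T sm))"
    using conj_commuting[OF Units_inv_Units[OF T_Units[OF sm]] T_closed] b by simp
  with M b sp show ?thesis
    by (intro exI[of _ "inv (T sm)"] exI[of _ sp])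
      (auto simp: T_Units sm M_sym[of sp b] contr_gen_None_conj_sm)
qed

lemma contr_gen_conj_pair:
  assumes "x \<in> S'" "y \<in> S'" "x \<noteq> y" "M' x y = enat m"
  shows "\<exists>u a b. u \<in> Units H \<and> a \<in> S \<and> b \<in> S \<and> a \<noteq> b \<and> M a b = enat m
           \<and> contr_gen x = u \<otimes> T a \<otimes> inv u \<and> contr_gen y = u \<otimes> T b \<otimes> inv u"
proof (cases x; cases y)
  fix a b
  assume "x = Some a" "y = Some b"
  then show ?thesis
    using assms T_closed
    by (intro exI[of _ \<one>] exI[of _ a] exI[of _ b]) (auto simp: contr_gen_def contr_set_def)
next
  fix b
  assume xy: "x = None" "y = Some b"
  then have "b \<in> S - {sp, sm}" "contr_edge_val M sp sm b = enat m"
    using assms by (auto simp: contr_set_def)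
  then obtain u a where "u \<in> Units H" "a \<in> S" "a \<noteq> b" "M a b = enat m"
    "contr_gen None = u \<otimes> T a \<otimes> inv u" "T b = u \<otimes> T b \<otimes> inv u"
    by (metis contr_gen_None_conj_pair)
  with xy \<open>b \<in> S - {sp, sm}\<close> show ?thesis
    by (intro exI[of _ u] exI[of _ a] exI[of _ b]) (simp add: contr_gen_def)
next
  fix a
  assume xy: "x = Some a" "y = None"
  then have "a \<in> S - {sp, sm}" "contr_edge_val M sp sm a = enat m"
    using assms by (auto simp: contr_set_def)
  then obtain u b where "u \<in> Units H" "b \<in> S" "b \<noteq> a" "M b a = enat m"
    "contr_gen None = u \<otimes> T b \<otimes> inv u" "T a = u \<otimes> T a \<otimes> inv u"
    by (metis contr_gen_None_conj_pair)
  with xy \<open>a \<in> S - {sp, sm}\<close> show ?thesis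
    by (intro exI[of _ u] exI[of _ a] exI[of _ b]) (simp add: M_sym[of a b] contr_gen_def)
qed (use assms in simp)

sublocale E: free_alg_eval H S' hs contr_gen
  by (intro free_alg_eval.intro free_alg_eval_axioms.intro ring_axioms hs_closed hs_add hs_mult hs_one
    hs_central contr_gen_closed)

sublocale E_hom: ring_hom_ring "free_alg S'" H E.eval
  by (rule ring_hom_ringI2[OF ring_free_alg ring_axioms E.eval_ring_hom])

lemma eval_hecke_rels:
  assumes "r \<in> hecke_rels S' M' L'"
  shows "E.eval r = \<zero>"
proof -
  consider (quadratic) x where "x \<in> S'"
      "r = (gen x \<ominus>\<^bsub>free_alg S'\<^esub> scal (vpow (L' x)))
        \<otimes>\<^bsub>free_alg S'\<^esub> (gen x \<oplus>\<^bsub>free_alg S'\<^esub> scal (vpow (- L' x)))"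
    | (braid) x y m where "x \<in> S'" "y \<in> S'" "x \<noteq> y" "M' x y = enat m"
      "r = word_prod S' (alt_word x y m) \<ominus>\<^bsub>free_alg S'\<^esub> word_prod S' (alt_word y x m)"
    using assms unfolding hecke_rels_def by blast
  then show ?thesis
  proof cases
    case quadratic
    obtain u t where u: "u \<in> Units H" and t: "t \<in> S"
      and weight_t: "L t = L' x" and gen_x: "contr_gen x = u \<otimes> T t \<otimes> inv u"
      using contr_gen_conj[OF quadratic(1)] by blast
    have "E.eval r = (contr_gen x \<ominus> hs (vpow (L' x))) \<otimes> (contr_gen x \<oplus> hs (vpow (- L' x)))"
      using quadratic by (simp add: gen_carrier scal_carrier a_minus_def E.eval_gen E.eval_scal)
    then show ?thesis
      using hecke_quadratic_conj[OF u t] by (simp add: weight_t gen_x)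
  next
    case braid
    obtain u a b where conjugate: "u \<in> Units H" "a \<in> S" "b \<in> S" "a \<noteq> b" "M a b = enat m"
      and gens: "contr_gen x = u \<otimes> T a \<otimes> inv u" "contr_gen y = u \<otimes> T b \<otimes> inv u"
      using contr_gen_conj_pair[OF braid(1-4)] by blast
    have "E.eval_word (alt_word x y m) = E.eval_word (alt_word y x m)"
      using hecke_braid_conj[OF conjugate] by (simp add: E.eval_word_def map_alt_word gens)
    moreover have "set (alt_word x y m) \<subseteq> S'" "set (alt_word y x m) \<subseteq> S'"
      using alt_word_set[of x y m] alt_word_set[of y x m] braid(1,2) by auto
    moreover have "E.eval r = E.eval_word (alt_word x y m) \<ominus> E.eval_word (alt_word y x m)"
      using braid(5) calculation(2,3) by (simp add: a_minus_def word_prod_carrier E.eval_word_prod)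
    ultimately show ?thesis
      by (simp add: E.eval_word_closed r_neg a_minus_def)
  qed
qed

lemma contraction_hom_exists:
  "\<exists>\<phi>. A_algebra_hom S' M' L' S M L \<phi>
      \<and> (\<forall>s \<in> S - {sp, sm}. \<phi> (hT S' M' L' (Some s)) = T s)
      \<and> \<phi> (hT S' M' L' None) = T sp \<otimes> T sm \<otimes> inv (T sp)"
proof -
  have "hecke_rels S' M' L' \<subseteq> a_kernel (free_alg S') H E.eval"
    using hecke_rels_carrier eval_hecke_rels unfolding a_kernel_def' by blast
  then have "hecke_ideal S' M' L' \<subseteq> a_kernel (free_alg S') H E.eval"
    unfolding hecke_ideal_def by (rule ring.genideal_minimal[OF ring_free_alg E_hom.kernel_is_ideal])
  then have vanish: "\<And>f. f \<in> hecke_ideal S' M' L' \<Longrightarrow> E.eval f = \<zero>"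
    unfolding a_kernel_def' by blast
  from quotient_ring_hom_lift[OF ring_free_alg ring_axioms E.eval_ring_hom hecke_ideal_ideal vanish]
  obtain \<phi> where \<phi>: "\<phi> \<in> ring_hom (hecke S' M' L') H"
    and \<phi>_coset: "\<forall>f\<in>carrier (free_alg S'). \<phi> (hecke_ideal S' M' L' +>\<^bsub>free_alg S'\<^esub> f) = E.eval f"
    unfolding hecke_def by blast
  have "A_algebra_hom S' M' L' S M L \<phi>"
    unfolding A_algebra_hom_def H_def[symmetric]
    using \<phi> \<phi>_coset by (simp add: hscal_def scal_carrier E.eval_scal)
  moreover have "\<phi> (hT S' M' L' x) = contr_gen x" if "x \<in> S'" for x
    using that \<phi>_coset by (simp add: hT_def gen_carrier E.eval_gen)
  moreover have "None \<in> S'" "\<And>s. s \<in> S - {sp, sm} \<Longrightarrow> Some s \<in> S'"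
    by (simp_all add: contr_set_def)
  ultimately show ?thesis
    by (metis contr_gen_def option.simps(4,5))
qed

end

theorem mainTheorem5:
  fixes S :: "'s set" and M :: "'s \<Rightarrow> 's \<Rightarrow> enat" and L :: "'s \<Rightarrow> int"
    and sp sm :: 's
  assumes "coxeter_matrix S M"
    and "weight_function S M L"
    and "sp \<in> S" and "sm \<in> S" and "M sp sm = 3"
  shows "\<exists>\<phi>. A_algebra_hom (contr_set S sp sm) (contr_matrix M sp sm) (contr_weight L sp)
                            S M L \<phi>
            \<and> (\<forall>s \<in> S - {sp, sm}.
                 \<phi> (hT (contr_set S sp sm) (contr_matrix M sp sm) (contr_weight L sp) (Some s))
                   = hT S M L s)
            \<and> \<phi> (hT (contr_set S sp sm) (contr_matrix M sp sm) (contr_weight L sp) None)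
                = hT S M L sp \<otimes>\<^bsub>hecke S M L\<^esub> hT S M L sm
                  \<otimes>\<^bsub>hecke S M L\<^esub> inv\<^bsub>hecke S M L\<^esub> (hT S M L sp)"
proof -
  interpret edge_contraction S M L "hecke S M L" sp sm
    using assms by unfold_locales
  show ?thesis
    by (rule contraction_hom_exists)
qed

end
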